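(* Let $r\ge 2$ and let $G$ be a graph on $n$ vertices. If $e(G)\ge e(T_r(n))$, then $\lambda(G)\ge \lambda(T_r(n))$. Moreover, if $e(G)\ge e(T_r(n))$ and $\lambda(G)=\lambda(T_r(n))$, then $G\in\mathcal{F}_r(n)$. Conversely, every $G\in\mathcal{F}_r(n)$ satisfies $e(G)=e(T_r(n))$ and $\lambda(G)=\lambda(T_r(n))$.
   Context: All graphs are finite and simple; $e(G)$ is the number of edges and $\lambda(G)$ the spectral radius of the adjacency matrix. $T_r(n)$ is the complete $r$-partite graph on $n$ vertices with part sizes differing by at most one. The family $\mathcal{F}_r(n)$: write $n=ra+b$ with $0\le b<r$ and $a=\lfloor n/r\rfloor$. If $b=0$, $\mathcal{F}_r(n)$ is the set of all $(r-1)a$-regular graphs on $n$ vertices. If $1\le b<r$, $\mathcal{F}_r(n)$ is the set of all graphs $G$ on $n$ vertices having a partition $V(G)=X\sqcup Y$ with $|X|=b(a+1)$, $|Y|=(r-b)a$, such that every vertex of $X$ is adjacent to every vertex of $Y$, $G[X]$ is $(b-1)(a+1)$-regular, and $G[Y]$ is $(r-b-1)a$-regular. *)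

theory Defs
  imports "Jordan_Normal_Form.Spectral_Radius"
begin

text \<open>A finite simple graph on the vertex set {0..<n} is given by an adjacency
  relation E on nat which is irreflexive and symmetric on {0..<n}
  (values of E outside {0..<n} are irrelevant).\<close>

definition simple_graph :: "nat \<Rightarrow> (nat \<Rightarrow> nat \<Rightarrow> bool) \<Rightarrow> bool" where
  "simple_graph n E \<longleftrightarrow> (\<forall>i<n. \<not> E i i) \<and> (\<forall>i<n. \<forall>j<n. E i j \<longrightarrow> E j i)"

definition num_edges :: "nat \<Rightarrow> (nat \<Rightarrow> nat \<Rightarrow> bool) \<Rightarrow> nat" where
  "num_edges n E = card {(i, j). i < j \<and> j < n \<and> E i j}"

definition adj_mat :: "nat \<Rightarrow> (nat \<Rightarrow> nat \<Rightarrow> bool) \<Rightarrow> complex mat" where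
  "adj_mat n E = mat n n (\<lambda>(i, j). if E i j then 1 else 0)"

definition graph_spectral_radius :: "nat \<Rightarrow> (nat \<Rightarrow> nat \<Rightarrow> bool) \<Rightarrow> real" where
  "graph_spectral_radius n E = spectral_radius (adj_mat n E)"

text \<open>Turan graph T_r(n): vertex i lies in part (i mod r); two vertices are adjacent
  iff they lie in different parts. Part sizes differ by at most one.\<close>
definition turan :: "nat \<Rightarrow> nat \<Rightarrow> nat \<Rightarrow> bool" where
  "turan r i j \<longleftrightarrow> i mod r \<noteq> j mod r"

definition induced_regular :: "(nat \<Rightarrow> nat \<Rightarrow> bool) \<Rightarrow> nat set \<Rightarrow> nat \<Rightarrow> bool" where
  "induced_regular E S d \<longleftrightarrow> (\<forall>v\<in>S. card {u \<in> S. E v u} = d)"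

definition family_F :: "nat \<Rightarrow> nat \<Rightarrow> (nat \<Rightarrow> nat \<Rightarrow> bool) \<Rightarrow> bool" where
  "family_F r n E \<longleftrightarrow> simple_graph n E \<and>
     (let a = n div r; b = n mod r in
      if b = 0 then induced_regular E {0..<n} ((r - 1) * a)
      else (\<exists>X Y. X \<inter> Y = {} \<and> X \<union> Y = {0..<n} \<and>
                  card X = b * (a + 1) \<and> card Y = (r - b) * a \<and>
                  (\<forall>x\<in>X. \<forall>y\<in>Y. E x y) \<and>
                  induced_regular E X ((b - 1) * (a + 1)) \<and>
                  induced_regular E Y ((r - b - 1) * a)))"

end

theory Submission
  imports Defs "HOL-Analysis.Convex"
begin

text \<open>Let \<open>h\<^sub>v\<close> be the degree of \<open>v\<close> in the complement of \<open>G\<close>, \<open>a = n div r\<close>, and let \<open>\<mu>\<close> be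
  the larger root of \<open>\<mu>\<^sup>2 = (n - 2a - 1) \<mu> + (r - 1) a (a + 1)\<close>. For the positive test vector
  \<open>x\<^sub>v = 1 / (\<mu> + 1 + h\<^sub>v)\<close> the quadratic form \<open>x\<^sup>T A x\<close> equals
  \<open>(\<Sum> x)\<^sup>2 - \<Sum> x + \<mu> \<Sum> x\<^sup>2\<close> plus the sum of \<open>(x\<^sub>v - x\<^sub>w)\<^sup>2\<close> over the non-adjacent pairs,
  and the edge condition \<open>\<Sum> h\<^sub>v \<le> \<Sum> h\<^sub>v(T\<^sub>r(n))\<close> forces \<open>\<Sum> x \<ge> 1\<close>, because
  \<open>(h - a) (h - a + 1) \<ge> 0\<close> for integers. The Rayleigh quotient then gives \<open>\<lambda>(G) \<ge> \<mu>\<close>.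
  Equality forces \<open>\<Sum> x = 1\<close>, every \<open>h\<^sub>v \<in> {a - 1, a}\<close> and \<open>x\<close> constant across non-edges;
  these conditions describe exactly the family \<open>F\<^sub>r(n)\<close>, and on such graphs \<open>x\<close> is a positive
  eigenvector for \<open>\<mu>\<close>, so that \<open>\<lambda> = \<mu>\<close>. The Turan graph is one of them.\<close>

section \<open>Quadratic forms and the spectral radius\<close>

definition quad_form :: "nat \<Rightarrow> real mat \<Rightarrow> (nat \<Rightarrow> real) \<Rightarrow> real" where
  "quad_form n M x = (\<Sum>i<n. \<Sum>j<n. x i * M $$ (i, j) * x j)"

lemma pow_mat_add:
  fixes A :: "'a :: semiring_1 mat"
  assumes A: "A \<in> carrier_mat n n"
  shows "A ^\<^sub>m (k + l) = A ^\<^sub>m k * A ^\<^sub>m l"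
proof (induction l)
  case (Suc l)
  then show ?case
    using assoc_mult_mat[OF pow_carrier_mat[OF A] pow_carrier_mat[OF A] A, of k l] by simp
qed (use A in simp)

lemma transpose_pow_mat:
  fixes A :: "'a :: comm_semiring_1 mat"
  assumes A: "A \<in> carrier_mat n n" and sym: "transpose_mat A = A"
  shows "transpose_mat (A ^\<^sub>m k) = A ^\<^sub>m k"
proof (induction k)
  case (Suc k)
  have "transpose_mat (A ^\<^sub>m Suc k) = A * A ^\<^sub>m k"
    using transpose_mult[OF pow_carrier_mat[OF A] A, of k] Suc sym by simp
  also have "\<dots> = A ^\<^sub>m (1 + k)"
    using pow_mat_add[OF A, of 1 k] A by simp
  finally show ?case by simp
qed (use A in simp)

lemma quad_form_square_le:
  assumes P: "P \<in> carrier_mat n n" and sym: "transpose_mat P = P"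
  shows "(quad_form n P x)\<^sup>2 \<le> (\<Sum>i<n. (x i)\<^sup>2) * quad_form n (P * P) x"
proof -
  define y where "y i = (\<Sum>j<n. P $$ (i, j) * x j)" for i
  have sym': "P $$ (l, i) = P $$ (i, l)" if "i < n" "l < n" for i l
    using sym that P by (metis carrier_matD index_transpose_mat(1))
  have "quad_form n P x = (\<Sum>i<n. x i * y i)"
    unfolding quad_form_def y_def by (simp add: sum_distrib_left mult.assoc)
  moreover have "quad_form n (P * P) x = (\<Sum>l<n. (y l)\<^sup>2)"
  proof -
    have "quad_form n (P * P) x = (\<Sum>i<n. \<Sum>j<n. \<Sum>l<n. x i * (P $$ (i, l) * P $$ (l, j)) * x j)"
      unfolding quad_form_def using P
      by (intro sum.cong refl) (simp add: scalar_prod_def atLeast0LessThan sum_distrib_left sum_distrib_right)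
    also have "\<dots> = (\<Sum>i<n. \<Sum>l<n. \<Sum>j<n. x i * (P $$ (i, l) * P $$ (l, j)) * x j)"
      by (rule sum.cong[OF refl], rule sum.swap)
    also have "\<dots> = (\<Sum>l<n. \<Sum>i<n. \<Sum>j<n. x i * (P $$ (i, l) * P $$ (l, j)) * x j)"
      by (rule sum.swap)
    also have "\<dots> = (\<Sum>l<n. \<Sum>i<n. \<Sum>j<n. (P $$ (l, i) * x i) * (P $$ (l, j) * x j))"
      by (intro sum.cong refl) (simp add: sym' mult_ac)
    also have "\<dots> = (\<Sum>l<n. (y l)\<^sup>2)"
      unfolding y_def power2_eq_square by (simp add: sum_product)
    finally show ?thesis .
  qed
  ultimately show ?thesis using Cauchy_Schwarz_ineq_sum by simp
qed

lemma quad_form_pow_two_pow_ge: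
  assumes M: "M \<in> carrier_mat n n" and sym: "transpose_mat M = M"
    and t: "0 \<le> t" and Q: "0 < (\<Sum>i<n. (x i)\<^sup>2)"
    and ge: "t * (\<Sum>i<n. (x i)\<^sup>2) \<le> quad_form n M x"
  shows "(\<Sum>i<n. (x i)\<^sup>2) * t ^ (2 ^ k) \<le> quad_form n (M ^\<^sub>m (2 ^ k)) x"
proof (induction k)
  case 0
  show ?case using ge M by (simp add: mult.commute)
next
  case (Suc k)
  let ?Q = "\<Sum>i<n. (x i)\<^sup>2"
  have "?Q * (?Q * t ^ (2 ^ Suc k)) = (?Q * t ^ (2 ^ k))\<^sup>2"
    by (simp add: power2_eq_square power_mult[symmetric] mult_2 power_add)
  also have "\<dots> \<le> (quad_form n (M ^\<^sub>m (2 ^ k)) x)\<^sup>2"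
    using Suc Q t by (intro power_mono) auto
  also have "\<dots> \<le> ?Q * quad_form n (M ^\<^sub>m (2 ^ Suc k)) x"
    using quad_form_square_le[OF pow_carrier_mat[OF M] transpose_pow_mat[OF M sym], of "2 ^ k" x]
      pow_mat_add[OF M, of "2 ^ k" "2 ^ k"] by (simp add: mult_2)
  finally show ?case using Q by simp
qed

lemma quad_form_le_abs_bound:
  assumes "\<And>i j. i < n \<Longrightarrow> j < n \<Longrightarrow> \<bar>M $$ (i, j)\<bar> \<le> c"
  shows "quad_form n M x \<le> c * (\<Sum>i<n. \<bar>x i\<bar>)\<^sup>2"
proof -
  have "quad_form n M x \<le> (\<Sum>i<n. \<Sum>j<n. \<bar>x i\<bar> * c * \<bar>x j\<bar>)"
    unfolding quad_form_def
  proof (intro sum_mono)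
    fix i j assume "i \<in> {..<n}" "j \<in> {..<n}"
    then have "\<bar>x i\<bar> * \<bar>M $$ (i, j)\<bar> * \<bar>x j\<bar> \<le> \<bar>x i\<bar> * c * \<bar>x j\<bar>"
      using assms by (intro mult_right_mono mult_left_mono) auto
    then show "x i * M $$ (i, j) * x j \<le> \<bar>x i\<bar> * c * \<bar>x j\<bar>"
      by (metis abs_ge_self abs_mult order_trans)
  qed
  also have "\<dots> = c * (\<Sum>i<n. \<bar>x i\<bar>)\<^sup>2"
    by (simp add: power2_eq_square sum_product sum_distrib_left mult_ac)
  finally show ?thesis .
qed

lemma quad_form_pow_bounded:
  assumes M: "M \<in> carrier_mat n n"
    and sr: "spectral_radius (map_mat complex_of_real M) < 1"
  obtains C where "\<And>k. quad_form n (M ^\<^sub>m k) x \<le> C"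
proof -
  have Mc: "map_mat complex_of_real M \<in> carrier_mat n n" using M by simp
  obtain c where c: "\<And>k. norm_bound (map_mat complex_of_real M ^\<^sub>m k) c"
    using spectral_radius_jnf_norm_bound_less_1_upper_triangular[OF Mc sr] by auto
  have "\<bar>(M ^\<^sub>m k) $$ (i, j)\<bar> \<le> c" if "i < n" "j < n" for k i j
    using c[of k] that M unfolding of_real_hom.mat_hom_pow[OF M, symmetric] norm_bound_def
    by fastforce
  then show ?thesis using that quad_form_le_abs_bound by blast
qed

lemma spectral_radius_smult_ge:
  assumes A: "A \<in> carrier_mat n n" and n: "0 < n"
  shows "norm c * spectral_radius A \<le> spectral_radius (c \<cdot>\<^sub>m A)"
proof -
  obtain z where z: "z \<in> spectrum A" "spectral_radius A = norm z"
    using spectral_radius_mem_max(1)[OF A n] by auto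
  then obtain v where v: "eigenvector A v z"
    unfolding spectrum_def eigenvalue_def by auto
  have v': "v \<in> carrier_vec n" "A *\<^sub>v v = z \<cdot>\<^sub>v v"
    using v A unfolding eigenvector_def by auto
  have "(c \<cdot>\<^sub>m A) *\<^sub>v v = (c * z) \<cdot>\<^sub>v v"
  proof (rule eq_vecI)
    fix i assume "i < dim_vec ((c * z) \<cdot>\<^sub>v v)"
    then have i: "i < n" using v' by simp
    have "((c \<cdot>\<^sub>m A) *\<^sub>v v) $ i = c * ((A *\<^sub>v v) $ i)"
      using A v'(1) i by simp
    also have "\<dots> = ((c * z) \<cdot>\<^sub>v v) $ i"
      using v' i by simp
    finally show "((c \<cdot>\<^sub>m A) *\<^sub>v v) $ i = ((c * z) \<cdot>\<^sub>v v) $ i" .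
  qed (use A v' in simp)
  then have "c * z \<in> spectrum (c \<cdot>\<^sub>m A)"
    using v unfolding spectrum_def eigenvalue_def eigenvector_def by auto
  then have "norm (c * z) \<le> spectral_radius (c \<cdot>\<^sub>m A)"
    using A n by (intro spectral_radius_mem_max(2)[of _ n]) auto
  then show ?thesis using z by (simp add: norm_mult)
qed

text \<open>The Rayleigh-quotient bound is proved without the spectral theorem: if the quotient exceeded
  \<open>1\<close>, then by Cauchy--Schwarz the quadratic forms of the powers \<open>B ^ 2 ^ k\<close> would grow doubly
  exponentially, whereas the entries of all powers of \<open>B\<close> stay bounded.\<close>

lemma quad_form_le_of_spectral_radius_lt_1:
  assumes B: "B \<in> carrier_mat n n" and sym: "transpose_mat B = B"
    and sr: "spectral_radius (map_mat complex_of_real B) < 1"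
  shows "quad_form n B x \<le> (\<Sum>i<n. (x i)\<^sup>2)"
proof (rule ccontr)
  let ?Q = "\<Sum>i<n. (x i)\<^sup>2"
  assume "\<not> ?thesis"
  then have gt: "?Q < quad_form n B x" by simp
  have Q: "0 < ?Q"
  proof (rule ccontr)
    assume "\<not> 0 < ?Q"
    then have "?Q = 0" by (simp add: order_antisym sum_nonneg)
    then have "\<forall>i<n. x i = 0" by (simp add: sum_nonneg_eq_0_iff)
    then show False using gt unfolding quad_form_def by simp
  qed
  obtain C where C: "\<And>k. quad_form n (B ^\<^sub>m k) x \<le> C"
    using quad_form_pow_bounded[OF B sr] by blast
  define t where "t = quad_form n B x / ?Q"
  have t: "1 < t" using gt Q unfolding t_def by simp
  have grow: "?Q * t ^ (2 ^ k) \<le> C" for k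
    using quad_form_pow_two_pow_ge[OF B sym _ Q, of t k] C[of "2 ^ k"] t Q
    unfolding t_def by simp
  obtain k where "C / ?Q < t ^ k" using real_arch_pow[OF t] by blast
  also have "\<dots> \<le> t ^ (2 ^ k)"
    using t by (intro power_increasing) (auto intro: less_imp_le less_exp)
  finally show False using grow[of k] Q by (simp add: field_simps)
qed

lemma quad_form_le_spectral_radius:
  assumes M: "M \<in> carrier_mat n n" and sym: "transpose_mat M = M"
  shows "quad_form n M x \<le> spectral_radius (map_mat complex_of_real M) * (\<Sum>i<n. (x i)\<^sup>2)"
proof -
  let ?Q = "\<Sum>i<n. (x i)\<^sup>2" and ?\<rho> = "spectral_radius (map_mat complex_of_real M)"
  have scaled: "quad_form n M x \<le> s * ?Q" if s: "?\<rho> < s" for s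
  proof (cases "n = 0")
    case True
    then show ?thesis unfolding quad_form_def by simp
  next
    case False
    have Mc: "map_mat complex_of_real M \<in> carrier_mat n n" using M by simp
    from spectral_radius_mem_max(1)[OF Mc] False have "0 \<le> ?\<rho>" by auto
    with s have s0: "0 < s" by simp
    define B where "B = (1 / s) \<cdot>\<^sub>m M"
    have B: "B \<in> carrier_mat n n" "transpose_mat B = B"
      using M sym unfolding B_def by (auto simp: mat_eq_iff)
    have "map_mat complex_of_real M = complex_of_real s \<cdot>\<^sub>m map_mat complex_of_real B"
      using M s0 unfolding B_def by (auto simp: mat_eq_iff)
    then have "s * spectral_radius (map_mat complex_of_real B) \<le> ?\<rho>"
      using spectral_radius_smult_ge[of "map_mat complex_of_real B" n "complex_of_real s"] B False s0
      by simp
    then have "spectral_radius (map_mat complex_of_real B) < 1"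
      using s s0 by (smt (verit) mult_le_cancel_left1)
    then have "quad_form n B x \<le> ?Q"
      using quad_form_le_of_spectral_radius_lt_1[OF B] by blast
    moreover have "quad_form n B x = quad_form n M x / s"
      using M unfolding B_def quad_form_def by (simp add: sum_divide_distrib)
    ultimately show ?thesis using s0 by (simp add: field_simps)
  qed
  show ?thesis
  proof (cases "?Q = 0")
    case True
    then show ?thesis using scaled[of "?\<rho> + 1"] by simp
  next
    case False
    then have Q: "0 < ?Q" by (simp add: order_less_le sum_nonneg)
    have "quad_form n M x / ?Q \<le> ?\<rho>"
      by (rule dense_ge) (use scaled Q in \<open>simp add: pos_divide_le_eq\<close>)
    then show ?thesis using Q by (simp add: pos_divide_le_eq)
  qed
qed

lemma spectral_radius_le_of_subinvariant:
  assumes M: "M \<in> carrier_mat n n" and n: "0 < n"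
    and nonneg: "\<And>i j. i < n \<Longrightarrow> j < n \<Longrightarrow> 0 \<le> M $$ (i, j)"
    and pos: "\<And>i. i < n \<Longrightarrow> 0 < y i"
    and sub: "\<And>i. i < n \<Longrightarrow> (\<Sum>j<n. M $$ (i, j) * y j) \<le> \<mu> * y i"
  shows "spectral_radius (map_mat complex_of_real M) \<le> \<mu>"
proof -
  let ?Mc = "map_mat complex_of_real M"
  have Mc: "?Mc \<in> carrier_mat n n" using M by simp
  obtain z where z: "z \<in> spectrum ?Mc" "spectral_radius ?Mc = norm z"
    using spectral_radius_mem_max(1)[OF Mc n] by auto
  then obtain v where "eigenvector ?Mc v z" unfolding spectrum_def eigenvalue_def by auto
  then have v: "v \<in> carrier_vec n" "v \<noteq> 0\<^sub>v n" "?Mc *\<^sub>v v = z \<cdot>\<^sub>v v"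
    using Mc unfolding eigenvector_def by auto
  define f where "f i = norm (v $ i) / y i" for i
  obtain i0 where i0: "i0 < n" "\<And>j. j < n \<Longrightarrow> f j \<le> f i0"
    using Max_in[of "f ` {..<n}"] Max_ge[of "f ` {..<n}"] n by fastforce
  have bound: "norm (v $ j) \<le> f i0 * y j" if "j < n" for j
    using i0(2)[OF that] pos[OF that] unfolding f_def by (simp add: pos_divide_le_eq)
  have "norm (v $ i0) \<noteq> 0"
  proof
    assume "norm (v $ i0) = 0"
    then have "v $ j = 0" if "j < n" for j
      using bound[OF that] pos[OF that] i0 unfolding f_def by (simp add: order_antisym)
    then show False using v(1,2) by (auto simp: vec_eq_iff)
  qed
  then have vi0: "0 < norm (v $ i0)" by simp
  have "norm z * norm (v $ i0) = norm (\<Sum>j<n. complex_of_real (M $$ (i0, j)) * v $ j)"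
    using arg_cong[OF v(3), of "\<lambda>w. w $ i0"] M v(1) i0(1)
    by (simp add: norm_mult scalar_prod_def atLeast0LessThan)
  also have "\<dots> \<le> (\<Sum>j<n. M $$ (i0, j) * (f i0 * y j))"
    by (rule order_trans[OF norm_sum sum_mono])
       (use nonneg i0(1) bound in \<open>auto simp: norm_mult intro: mult_left_mono\<close>)
  also have "\<dots> = f i0 * (\<Sum>j<n. M $$ (i0, j) * y j)"
    by (simp add: sum_distrib_left mult_ac)
  also have "\<dots> \<le> f i0 * (\<mu> * y i0)"
    using sub[OF i0(1)] pos[OF i0(1)] unfolding f_def by (intro mult_left_mono) auto
  also have "\<dots> = \<mu> * norm (v $ i0)"
    using pos[OF i0(1)] unfolding f_def by simp
  finally show ?thesis using z vi0 by simp
qed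

section \<open>Degrees in a graph and in its complement\<close>

definition adj_mat_real :: "nat \<Rightarrow> (nat \<Rightarrow> nat \<Rightarrow> bool) \<Rightarrow> real mat" where
  "adj_mat_real n E = mat n n (\<lambda>(i, j). if E i j then 1 else 0)"

lemma adj_mat_real_carrier [simp]: "adj_mat_real n E \<in> carrier_mat n n"
  unfolding adj_mat_real_def by simp

lemma adj_mat_eq_map_real: "adj_mat n E = map_mat complex_of_real (adj_mat_real n E)"
  unfolding adj_mat_def adj_mat_real_def by (rule eq_matI) auto

lemma simple_graph_irrefl: "simple_graph n E \<Longrightarrow> i < n \<Longrightarrow> \<not> E i i"
  unfolding simple_graph_def by blast

lemma simple_graph_sym: "simple_graph n E \<Longrightarrow> i < n \<Longrightarrow> j < n \<Longrightarrow> E i j \<longleftrightarrow> E j i"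
  unfolding simple_graph_def by blast

lemma transpose_adj_mat_real:
  "simple_graph n E \<Longrightarrow> transpose_mat (adj_mat_real n E) = adj_mat_real n E"
  unfolding adj_mat_real_def by (rule eq_matI) (auto dest: simple_graph_sym)

definition vertex_degree :: "nat \<Rightarrow> (nat \<Rightarrow> nat \<Rightarrow> bool) \<Rightarrow> nat \<Rightarrow> nat" where
  "vertex_degree n E i = card {j. j < n \<and> E i j}"

definition compl_neighbours :: "nat \<Rightarrow> (nat \<Rightarrow> nat \<Rightarrow> bool) \<Rightarrow> nat \<Rightarrow> nat set" where
  "compl_neighbours n E i = {j. j < n \<and> j \<noteq> i \<and> \<not> E i j}"

definition compl_degree :: "nat \<Rightarrow> (nat \<Rightarrow> nat \<Rightarrow> bool) \<Rightarrow> nat \<Rightarrow> nat" where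
  "compl_degree n E i = card (compl_neighbours n E i)"

lemma finite_compl_neighbours [simp]: "finite (compl_neighbours n E i)"
  unfolding compl_neighbours_def by auto

lemma vertex_degree_plus_compl_degree:
  assumes G: "simple_graph n E" and i: "i < n"
  shows "vertex_degree n E i + compl_degree n E i = n - 1"
proof -
  have "{j. j < n \<and> E i j} \<union> compl_neighbours n E i = {..<n} - {i}"
    using simple_graph_irrefl[OF G i] i unfolding compl_neighbours_def by auto
  then have "card ({j. j < n \<and> E i j} \<union> compl_neighbours n E i) = n - 1"
    using i by simp
  moreover have "card ({j. j < n \<and> E i j} \<union> compl_neighbours n E i)
      = vertex_degree n E i + compl_degree n E i"
    unfolding vertex_degree_def compl_degree_def
    by (rule card_Un_disjoint) (auto simp: compl_neighbours_def)
  ultimately show ?thesis by simp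
qed

lemma sum_vertex_degree:
  assumes G: "simple_graph n E"
  shows "(\<Sum>i<n. vertex_degree n E i) = 2 * num_edges n E"
proof -
  define P where "P = {(i, j). i < j \<and> j < n \<and> E i j}"
  have finP: "finite P" unfolding P_def by (rule finite_subset[of _ "{..<n} \<times> {..<n}"]) auto
  have swap: "prod.swap ` P = {(i, j). j < i \<and> i < n \<and> E i j}"
    unfolding P_def by (auto simp: image_iff simple_graph_sym[OF G])
  have "(\<Sum>i<n. vertex_degree n E i) = card (SIGMA i:{..<n}. {j. j < n \<and> E i j})"
    unfolding vertex_degree_def by (rule card_SigmaI[symmetric]) auto
  also have "(SIGMA i:{..<n}. {j. j < n \<and> E i j}) = P \<union> prod.swap ` P"
  proof (rule equalityI)
    show "(SIGMA i:{..<n}. {j. j < n \<and> E i j}) \<subseteq> P \<union> prod.swap ` P"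
    proof
      fix p assume "p \<in> (SIGMA i:{..<n}. {j. j < n \<and> E i j})"
      then obtain i j where p: "p = (i, j)" "i < n" "j < n" "E i j" by blast
      then have "i \<noteq> j" using simple_graph_irrefl[OF G] by blast
      then show "p \<in> P \<union> prod.swap ` P" unfolding swap using p by (auto simp: P_def neq_iff)
    qed
    show "P \<union> prod.swap ` P \<subseteq> (SIGMA i:{..<n}. {j. j < n \<and> E i j})"
      unfolding swap by (auto simp: P_def)
  qed
  also have "card \<dots> = card P + card (prod.swap ` P)"
    using finP by (intro card_Un_disjoint) (auto simp: P_def)
  also have "card (prod.swap ` P) = card P" by (simp add: card_image)
  finally show ?thesis unfolding num_edges_def P_def by simp
qed

lemma num_edges_compl_degree:
  assumes G: "simple_graph n E"
  shows "2 * num_edges n E + (\<Sum>i<n. compl_degree n E i) = n * (n - 1)"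
  using vertex_degree_plus_compl_degree[OF G]
  by (simp flip: sum_vertex_degree[OF G] sum.distrib)

lemma num_edges_le_iff_sum_compl_degree_ge:
  assumes "simple_graph n E" and "simple_graph n H"
  shows "num_edges n H \<le> num_edges n E \<longleftrightarrow>
         (\<Sum>i<n. compl_degree n E i) \<le> (\<Sum>i<n. compl_degree n H i)"
  using num_edges_compl_degree[OF assms(1)] num_edges_compl_degree[OF assms(2)] by linarith

lemma sum_compl_neighbours_swap:
  assumes G: "simple_graph n E"
  shows "(\<Sum>i<n. \<Sum>j\<in>compl_neighbours n E i. g j) = (\<Sum>j<n. real (compl_degree n E j) * g j)"
proof -
  have "(\<Sum>i<n. \<Sum>j\<in>compl_neighbours n E i. g j)
      = (\<Sum>(i, j)\<in>(SIGMA i:{..<n}. compl_neighbours n E i). g j)"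
    by (rule sum.Sigma) auto
  also have "(SIGMA i:{..<n}. compl_neighbours n E i) = prod.swap ` (SIGMA j:{..<n}. compl_neighbours n E j)"
    unfolding compl_neighbours_def by (auto simp: image_iff simple_graph_sym[OF G])
  also have "(\<Sum>(i, j)\<in>\<dots>. g j) = (\<Sum>(j, i)\<in>(SIGMA j:{..<n}. compl_neighbours n E j). g j)"
    by (subst sum.reindex) (auto simp: case_prod_beta)
  also have "\<dots> = (\<Sum>j<n. \<Sum>i\<in>compl_neighbours n E j. g j)"
    by (rule sum.Sigma[symmetric]) auto
  finally show ?thesis unfolding compl_degree_def by simp
qed

lemma adj_row_sum:
  assumes G: "simple_graph n E" and i: "i < n"
  shows "(\<Sum>j<n. adj_mat_real n E $$ (i, j) * x j)
       = (\<Sum>j<n. x j) - x i - (\<Sum>j\<in>compl_neighbours n E i. x j)"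
proof -
  define A where "A = {j. j < n \<and> E i j}"
  have part: "{..<n} = insert i (A \<union> compl_neighbours n E i)"
    using i unfolding A_def compl_neighbours_def by auto
  have disj: "i \<notin> A \<union> compl_neighbours n E i" "A \<inter> compl_neighbours n E i = {}"
    using simple_graph_irrefl[OF G i] unfolding A_def compl_neighbours_def by auto
  have "(\<Sum>j<n. x j) = x i + (\<Sum>j\<in>A. x j) + (\<Sum>j\<in>compl_neighbours n E i. x j)"
    unfolding part using disj by (simp add: sum.union_disjoint A_def)
  moreover have "(\<Sum>j<n. adj_mat_real n E $$ (i, j) * x j) = (\<Sum>j<n. if E i j then x j else 0)"
    using i unfolding adj_mat_real_def by (intro sum.cong) auto
  moreover have "{j \<in> {..<n}. E i j} = A" unfolding A_def by auto
  ultimately show ?thesis using sum.inter_filter[of "{..<n}" x "E i"] by simp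
qed

lemma quad_form_adj:
  assumes G: "simple_graph n E"
  shows "quad_form n (adj_mat_real n E) x
       = (\<Sum>i<n. x i)\<^sup>2 - (\<Sum>i<n. (1 + real (compl_degree n E i)) * (x i)\<^sup>2)
         + (\<Sum>i<n. \<Sum>j\<in>compl_neighbours n E i. (x i - x j)\<^sup>2) / 2"
proof -
  let ?S = "\<Sum>i<n. x i" and ?h = "\<lambda>i. real (compl_degree n E i)"
  define Z where "Z = (\<Sum>i<n. \<Sum>j\<in>compl_neighbours n E i. x i * x j)"
  have "quad_form n (adj_mat_real n E) x = (\<Sum>i<n. x i * (\<Sum>j<n. adj_mat_real n E $$ (i, j) * x j))"
    unfolding quad_form_def by (simp add: sum_distrib_left mult.assoc)
  also have "\<dots> = (\<Sum>i<n. x i * (?S - x i - (\<Sum>j\<in>compl_neighbours n E i. x j)))"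
    using adj_row_sum[OF G] by simp
  also have "\<dots> = ?S\<^sup>2 - (\<Sum>i<n. (x i)\<^sup>2) - Z"
    unfolding Z_def
    by (simp add: algebra_simps sum_subtractf sum_distrib_left sum_distrib_right power2_eq_square)
  finally have q: "quad_form n (adj_mat_real n E) x = ?S\<^sup>2 - (\<Sum>i<n. (x i)\<^sup>2) - Z" .
  have "(\<Sum>i<n. \<Sum>j\<in>compl_neighbours n E i. (x i - x j)\<^sup>2)
      = (\<Sum>i<n. ?h i * (x i)\<^sup>2) + (\<Sum>i<n. \<Sum>j\<in>compl_neighbours n E i. (x j)\<^sup>2) - 2 * Z"
    unfolding Z_def compl_degree_def
    by (simp add: power2_diff sum_subtractf sum.distrib sum_distrib_left mult.assoc)
  also have "(\<Sum>i<n. \<Sum>j\<in>compl_neighbours n E i. (x j)\<^sup>2) = (\<Sum>i<n. ?h i * (x i)\<^sup>2)"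
    by (rule sum_compl_neighbours_swap[OF G])
  finally show ?thesis
    unfolding q by (simp add: algebra_simps sum.distrib)
qed

section \<open>The test vector\<close>

text \<open>With \<open>a = n div r\<close> and \<open>b = n mod r\<close>, the Turan graph has \<open>b\<close> parts of size \<open>a + 1\<close> and
  \<open>r - b\<close> parts of size \<open>a\<close>; \<open>turan_compl_degree_sum\<close> is the sum of the degrees of its
  complement, and \<open>turan_radius\<close>, its spectral radius, is the larger root of
  \<open>\<mu>\<^sup>2 = (n - 2a - 1) \<mu> + (r - 1) a (a + 1)\<close>.\<close>

definition turan_radius :: "nat \<Rightarrow> nat \<Rightarrow> real" where
  "turan_radius r n = (let a = real (n div r); d = real n - 2 * a - 1
     in (d + sqrt (d\<^sup>2 + 4 * (real r - 1) * a * (a + 1))) / 2)"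

definition turan_compl_degree_sum :: "nat \<Rightarrow> nat \<Rightarrow> real" where
  "turan_compl_degree_sum r n = (let a = real (n div r); b = real (n mod r)
     in b * (a + 1) * a + (real r - b) * a * (a - 1))"

lemma turan_radius_root:
  fixes r n :: nat
  assumes r: "1 \<le> r"
  defines "a \<equiv> real (n div r)" and "\<mu> \<equiv> turan_radius r n"
  shows "0 \<le> \<mu>" and "real n - 2 * a - 1 \<le> \<mu>"
    and "\<mu>\<^sup>2 = (real n - 2 * a - 1) * \<mu> + (real r - 1) * a * (a + 1)"
proof -
  define d where "d = real n - 2 * a - 1"
  define e where "e = 4 * (real r - 1) * a * (a + 1)"
  have e: "0 \<le> e" unfolding e_def a_def using r by simp
  have sq: "(sqrt (d\<^sup>2 + e))\<^sup>2 = d\<^sup>2 + e" using e by simp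
  have "\<bar>d\<bar> \<le> sqrt (d\<^sup>2 + e)" using e real_sqrt_le_mono[of "d\<^sup>2" "d\<^sup>2 + e"] by simp
  then have s: "d \<le> sqrt (d\<^sup>2 + e)" "- d \<le> sqrt (d\<^sup>2 + e)" by linarith+
  have \<mu>: "\<mu> = (d + sqrt (d\<^sup>2 + e)) / 2"
    unfolding \<mu>_def turan_radius_def Let_def d_def e_def a_def by simp
  then have "2 * \<mu> = d + sqrt (d\<^sup>2 + e)" by simp
  then have "0 \<le> \<mu>" "d \<le> \<mu>" using s by linarith+
  then show "0 \<le> \<mu>" "real n - 2 * a - 1 \<le> \<mu>" by (simp_all add: d_def)
  show "\<mu>\<^sup>2 = (real n - 2 * a - 1) * \<mu> + (real r - 1) * a * (a + 1)"
    unfolding \<mu> using sq unfolding d_def e_def by (simp add: power2_eq_square field_simps)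
qed

lemma turan_radius_plus_pos:
  assumes "1 \<le> r" and "2 \<le> n"
  shows "0 < turan_radius r n + real (n div r)"
  using turan_radius_root(1,2)[OF assms(1), of n] assms(2) by (cases "n div r = 0") auto

lemma turan_radius_identity:
  fixes r n :: nat
  assumes "1 \<le> r"
  defines "a \<equiv> real (n div r)" and "\<mu> \<equiv> turan_radius r n"
  shows "real n * (\<mu> + 2 * a) - turan_compl_degree_sum r n = (\<mu> + a) * (\<mu> + a + 1)"
proof -
  have n: "real n = real r * real (n div r) + real (n mod r)"
    using mult_div_mod_eq[of r n] by (metis of_nat_add of_nat_mult)
  show ?thesis
    using turan_radius_root(3)[OF assms(1), of n] unfolding a_def \<mu>_def
    by (simp add: turan_compl_degree_sum_def Let_def n power2_eq_square algebra_simps)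
qed

definition turan_test_vec :: "nat \<Rightarrow> nat \<Rightarrow> (nat \<Rightarrow> nat \<Rightarrow> bool) \<Rightarrow> nat \<Rightarrow> real" where
  "turan_test_vec r n E i = 1 / (turan_radius r n + 1 + real (compl_degree n E i))"

lemma turan_test_vec_pos: "1 \<le> r \<Longrightarrow> 0 < turan_test_vec r n E i"
  using turan_radius_root(1)[of r n] unfolding turan_test_vec_def by simp

lemma turan_test_vec_mult:
  "1 \<le> r \<Longrightarrow> turan_test_vec r n E i * (turan_radius r n + 1 + real (compl_degree n E i)) = 1"
  using turan_radius_root(1)[of r n] unfolding turan_test_vec_def by simp

lemma turan_test_vec_eq_iff:
  "1 \<le> r \<Longrightarrow> turan_test_vec r n E i = turan_test_vec r n E j \<longleftrightarrow> compl_degree n E i = compl_degree n E j"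
  using turan_radius_root(1)[of r n] unfolding turan_test_vec_def by (simp add: divide_cancel_left)

lemma sum_sq_turan_test_vec_pos:
  assumes r: "1 \<le> r" and n: "0 < n"
  shows "0 < (\<Sum>i<n. (turan_test_vec r n E i)\<^sup>2)"
proof -
  have "0 < (turan_test_vec r n E i)\<^sup>2" for i
    using turan_test_vec_pos[OF r] by (rule zero_less_power)
  then show ?thesis using n by (intro sum_pos) auto
qed

lemma consecutive_product_nonneg: "0 \<le> (real h - real a) * (real h - real a + 1)"
  by (cases "a \<le> h") (auto intro: mult_nonpos_nonpos)

lemma consecutive_product_eq_0_iff:
  "(real h - real a) * (real h - real a + 1) = 0 \<longleftrightarrow> h = a \<or> h + 1 = a"
  by auto

text \<open>Expanding \<open>(\<mu> + a) (\<mu> + a + 1) = (\<mu> + 2a - h) (\<mu> + 1 + h) + (h - a) (h - a + 1)\<close>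
  at every vertex.\<close>

lemma sum_turan_test_vec:
  fixes r n :: nat and E :: "nat \<Rightarrow> nat \<Rightarrow> bool"
  assumes r: "1 \<le> r"
  defines "x \<equiv> turan_test_vec r n E" and "h \<equiv> \<lambda>i. real (compl_degree n E i)"
    and "a \<equiv> real (n div r)"
    and "D \<equiv> (turan_radius r n + real (n div r)) * (turan_radius r n + real (n div r) + 1)"
  shows "(\<Sum>i<n. x i) * D = D + (turan_compl_degree_sum r n - (\<Sum>i<n. h i))
           + (\<Sum>i<n. (h i - a) * (h i - a + 1) * x i)"
proof -
  let ?\<mu> = "turan_radius r n"
  have per: "D * x i = (?\<mu> + 2 * a - h i) + (h i - a) * (h i - a + 1) * x i" for i
  proof -
    have "D * x i = (?\<mu> + 2 * a - h i) * (x i * (?\<mu> + 1 + h i)) + (h i - a) * (h i - a + 1) * x i"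
      unfolding D_def a_def by (simp add: algebra_simps)
    then show ?thesis
      using turan_test_vec_mult[OF r, of n E i] unfolding x_def h_def by simp
  qed
  have "(\<Sum>i<n. x i) * D = (\<Sum>i<n. D * x i)"
    by (subst mult.commute) (rule sum_distrib_left)
  also have "\<dots> = (\<Sum>i<n. (?\<mu> + 2 * a - h i) + (h i - a) * (h i - a + 1) * x i)"
    by (rule sum.cong[OF refl]) (rule per)
  also have "\<dots> = real n * (?\<mu> + 2 * a) - (\<Sum>i<n. h i) + (\<Sum>i<n. (h i - a) * (h i - a + 1) * x i)"
    by (simp add: sum.distrib sum_subtractf)
  finally have "(\<Sum>i<n. x i) * D = real n * (?\<mu> + 2 * a) - (\<Sum>i<n. h i)
                  + (\<Sum>i<n. (h i - a) * (h i - a + 1) * x i)" .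
  then show ?thesis
    using turan_radius_identity[OF r, of n] unfolding D_def a_def by simp
qed

lemma quad_form_turan_test_vec:
  fixes r n :: nat and E :: "nat \<Rightarrow> nat \<Rightarrow> bool"
  assumes G: "simple_graph n E" and r: "1 \<le> r"
  defines "x \<equiv> turan_test_vec r n E"
  shows "quad_form n (adj_mat_real n E) x
       = (\<Sum>i<n. x i)\<^sup>2 - (\<Sum>i<n. x i) + turan_radius r n * (\<Sum>i<n. (x i)\<^sup>2)
         + (\<Sum>i<n. \<Sum>j\<in>compl_neighbours n E i. (x i - x j)\<^sup>2) / 2"
proof -
  have "(1 + real (compl_degree n E i)) * (x i)\<^sup>2 = x i - turan_radius r n * (x i)\<^sup>2" for i
  proof -
    have "(1 + real (compl_degree n E i)) * (x i)\<^sup>2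
        = x i * (x i * (turan_radius r n + 1 + real (compl_degree n E i))) - turan_radius r n * (x i)\<^sup>2"
      by (simp add: power2_eq_square algebra_simps)
    then show ?thesis using turan_test_vec_mult[OF r, of n E i] unfolding x_def by simp
  qed
  then show ?thesis
    using quad_form_adj[OF G, of x] by (simp add: sum_subtractf sum_distrib_left)
qed

lemma turan_test_vec_rayleigh:
  fixes r n :: nat and E :: "nat \<Rightarrow> nat \<Rightarrow> bool"
  assumes G: "simple_graph n E" and r: "1 \<le> r"
  defines "x \<equiv> turan_test_vec r n E"
  shows "(\<Sum>i<n. x i)\<^sup>2 - (\<Sum>i<n. x i) + (\<Sum>i<n. \<Sum>j\<in>compl_neighbours n E i. (x i - x j)\<^sup>2) / 2
       \<le> (graph_spectral_radius n E - turan_radius r n) * (\<Sum>i<n. (x i)\<^sup>2)"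
  using quad_form_le_spectral_radius[OF adj_mat_real_carrier transpose_adj_mat_real[OF G], of x]
    quad_form_turan_test_vec[OF G r]
  unfolding graph_spectral_radius_def adj_mat_eq_map_real x_def by (simp add: algebra_simps)

lemma sum_turan_test_vec_ge_1:
  assumes r: "1 \<le> r" and n: "2 \<le> n"
    and le: "(\<Sum>i<n. real (compl_degree n E i)) \<le> turan_compl_degree_sum r n"
  shows "1 \<le> (\<Sum>i<n. turan_test_vec r n E i)"
proof -
  let ?D = "(turan_radius r n + real (n div r)) * (turan_radius r n + real (n div r) + 1)"
  have D: "0 < ?D" using turan_radius_plus_pos[OF r n] by simp
  have "0 \<le> (\<Sum>i<n. (real (compl_degree n E i) - real (n div r))
                  * (real (compl_degree n E i) - real (n div r) + 1) * turan_test_vec r n E i)"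
    by (intro sum_nonneg mult_nonneg_nonneg consecutive_product_nonneg
              less_imp_le[OF turan_test_vec_pos[OF r]])
  then have "1 * ?D \<le> (\<Sum>i<n. turan_test_vec r n E i) * ?D"
    using sum_turan_test_vec[OF r, of n E] le by simp
  then show ?thesis using D by (simp only: mult_le_cancel_right_pos)
qed

section \<open>The extremal graphs\<close>

text \<open>The equality case of the test-vector argument; under these conditions the test vector is
  an eigenvector for \<open>turan_radius r n\<close>.\<close>

definition turan_extremal :: "nat \<Rightarrow> nat \<Rightarrow> (nat \<Rightarrow> nat \<Rightarrow> bool) \<Rightarrow> bool" where
  "turan_extremal r n E \<longleftrightarrow> simple_graph n E \<and>
     (\<forall>i<n. compl_degree n E i = n div r \<or> compl_degree n E i + 1 = n div r) \<and>
     (\<Sum>i<n. real (compl_degree n E i)) = turan_compl_degree_sum r n \<and>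
     (\<forall>i<n. \<forall>j\<in>compl_neighbours n E i. compl_degree n E j = compl_degree n E i)"

lemma turan_radius_le_spectral_radius:
  assumes r: "1 \<le> r" and n: "2 \<le> n" and G: "simple_graph n E"
    and le: "(\<Sum>i<n. real (compl_degree n E i)) \<le> turan_compl_degree_sum r n"
  shows "turan_radius r n \<le> graph_spectral_radius n E"
proof -
  let ?x = "turan_test_vec r n E"
  let ?S = "\<Sum>i<n. ?x i" and ?Q = "\<Sum>i<n. (?x i)\<^sup>2"
  have "?S * 1 \<le> ?S * ?S"
    using sum_turan_test_vec_ge_1[OF r n le] by (intro mult_left_mono) auto
  moreover have "0 \<le> (\<Sum>i<n. \<Sum>j\<in>compl_neighbours n E i. (?x i - ?x j)\<^sup>2)"
    by (intro sum_nonneg) simp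
  ultimately have "0 \<le> (graph_spectral_radius n E - turan_radius r n) * ?Q"
    using turan_test_vec_rayleigh[OF G r] by (simp add: power2_eq_square)
  moreover have "0 < ?Q" by (rule sum_sq_turan_test_vec_pos[OF r]) (use n in simp)
  ultimately show ?thesis by (simp add: zero_le_mult_iff)
qed

lemma compl_degrees_of_sum_turan_test_vec_eq_1:
  assumes r: "1 \<le> r"
    and le: "(\<Sum>i<n. real (compl_degree n E i)) \<le> turan_compl_degree_sum r n"
    and S: "(\<Sum>i<n. turan_test_vec r n E i) = 1"
  shows "(\<Sum>i<n. real (compl_degree n E i)) = turan_compl_degree_sum r n"
    and "i < n \<Longrightarrow> compl_degree n E i = n div r \<or> compl_degree n E i + 1 = n div r"
proof -
  let ?x = "turan_test_vec r n E" and ?h = "\<lambda>i. real (compl_degree n E i)" and ?a = "real (n div r)"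
  let ?z = "\<lambda>i. (?h i - ?a) * (?h i - ?a + 1) * ?x i"
  have z: "0 \<le> ?z i" for i
    by (intro mult_nonneg_nonneg consecutive_product_nonneg less_imp_le[OF turan_test_vec_pos[OF r]])
  then have "0 \<le> (\<Sum>i<n. ?z i)" by (intro sum_nonneg)
  then have sum_h: "(\<Sum>i<n. ?h i) = turan_compl_degree_sum r n" and Z: "(\<Sum>i<n. ?z i) = 0"
    using sum_turan_test_vec[OF r, of n E] le S by simp_all
  then show "(\<Sum>i<n. ?h i) = turan_compl_degree_sum r n" by blast
  assume i: "i < n"
  have "?z i = 0" using Z z i by (simp add: sum_nonneg_eq_0_iff)
  then have "(?h i - ?a) * (?h i - ?a + 1) = 0"
    using turan_test_vec_pos[OF r, of n E i] by (metis mult_eq_0_iff order_less_irrefl)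
  then show "compl_degree n E i = n div r \<or> compl_degree n E i + 1 = n div r"
    using consecutive_product_eq_0_iff by blast
qed

lemma turan_extremal_of_spectral_radius_le:
  assumes r: "1 \<le> r" and n: "2 \<le> n" and G: "simple_graph n E"
    and le: "(\<Sum>i<n. real (compl_degree n E i)) \<le> turan_compl_degree_sum r n"
    and up: "graph_spectral_radius n E \<le> turan_radius r n"
  shows "turan_extremal r n E"
proof -
  let ?x = "turan_test_vec r n E"
  let ?S = "\<Sum>i<n. ?x i" and ?Q = "\<Sum>i<n. (?x i)\<^sup>2"
    and ?W = "\<Sum>i<n. \<Sum>j\<in>compl_neighbours n E i. (?x i - ?x j)\<^sup>2"
  have S1: "1 \<le> ?S" by (rule sum_turan_test_vec_ge_1[OF r n le])
  have "?S * 1 \<le> ?S * ?S" using S1 by (intro mult_left_mono) auto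
  then have SS: "?S \<le> ?S\<^sup>2" by (simp add: power2_eq_square)
  have W0: "0 \<le> ?W" by (intro sum_nonneg) simp
  have "(graph_spectral_radius n E - turan_radius r n) * ?Q \<le> 0"
    using up by (intro mult_nonpos_nonneg) (auto intro: sum_nonneg)
  then have "?S\<^sup>2 - ?S + ?W / 2 \<le> 0" using turan_test_vec_rayleigh[OF G r] by linarith
  then have W: "?W = 0" and "?S\<^sup>2 - ?S = 0" using SS W0 by linarith+
  then have "?S * (?S - 1) = 0" by (simp add: power2_eq_square algebra_simps)
  then have S: "?S = 1" using S1 by auto
  have "?x j = ?x i" if "i < n" "j \<in> compl_neighbours n E i" for i j
  proof -
    have "(\<Sum>j\<in>compl_neighbours n E i. (?x i - ?x j)\<^sup>2) = 0"
      using W that(1) by (simp add: sum_nonneg_eq_0_iff sum_nonneg)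
    then have "(?x i - ?x j)\<^sup>2 = 0" using that(2) by (simp add: sum_nonneg_eq_0_iff)
    then show ?thesis by simp
  qed
  then have "compl_degree n E j = compl_degree n E i" if "i < n" "j \<in> compl_neighbours n E i" for i j
    using that turan_test_vec_eq_iff[OF r] by blast
  then show ?thesis
    unfolding turan_extremal_def
    using G compl_degrees_of_sum_turan_test_vec_eq_1[OF r le S] by blast
qed

lemma spectral_radius_le_turan_radius:
  assumes r: "1 \<le> r" and n: "2 \<le> n" and ext: "turan_extremal r n E"
  shows "graph_spectral_radius n E \<le> turan_radius r n"
proof -
  let ?x = "turan_test_vec r n E" and ?\<mu> = "turan_radius r n"
  have G: "simple_graph n E"
    and degrees: "\<And>i. i < n \<Longrightarrow> compl_degree n E i = n div r \<or> compl_degree n E i + 1 = n div r"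
    and sum_h: "(\<Sum>i<n. real (compl_degree n E i)) = turan_compl_degree_sum r n"
    and nbrs: "\<And>i j. i < n \<Longrightarrow> j \<in> compl_neighbours n E i \<Longrightarrow> compl_degree n E j = compl_degree n E i"
    using ext unfolding turan_extremal_def by auto
  have "(\<Sum>i<n. (real (compl_degree n E i) - real (n div r))
           * (real (compl_degree n E i) - real (n div r) + 1) * ?x i) = 0"
    using degrees consecutive_product_eq_0_iff by (intro sum.neutral) auto
  then have S: "(\<Sum>i<n. ?x i) = 1"
    using sum_turan_test_vec[OF r, of n E] sum_h turan_radius_plus_pos[OF r n] by simp
  have "(\<Sum>j<n. adj_mat_real n E $$ (i, j) * ?x j) = ?\<mu> * ?x i" if i: "i < n" for i
  proof -
    have "(\<Sum>j\<in>compl_neighbours n E i. ?x j) = (\<Sum>j\<in>compl_neighbours n E i. ?x i)"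
      using nbrs[OF i] turan_test_vec_eq_iff[OF r] by (intro sum.cong) auto
    then have "(\<Sum>j\<in>compl_neighbours n E i. ?x j) = real (compl_degree n E i) * ?x i"
      by (simp add: compl_degree_def)
    then show ?thesis
      using adj_row_sum[OF G i, of ?x] S turan_test_vec_mult[OF r, of n E i]
      by (simp add: algebra_simps)
  qed
  then show ?thesis
    unfolding graph_spectral_radius_def adj_mat_eq_map_real using n turan_test_vec_pos[OF r]
    by (intro spectral_radius_le_of_subinvariant[where y = ?x]) (auto simp: adj_mat_real_def)
qed

lemma spectral_radius_turan_extremal:
  assumes r: "1 \<le> r" and n: "2 \<le> n" and ext: "turan_extremal r n E"
  shows "graph_spectral_radius n E = turan_radius r n"
  using ext spectral_radius_le_turan_radius[OF assms] turan_radius_le_spectral_radius[OF r n]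
  unfolding turan_extremal_def by (simp add: order_antisym)

lemma num_edges_turan_extremal:
  assumes "turan_extremal r n E" and "turan_extremal r n H"
  shows "num_edges n E = num_edges n H"
proof -
  have "real (\<Sum>i<n. compl_degree n E i) = real (\<Sum>i<n. compl_degree n H i)"
    using assms unfolding turan_extremal_def by simp
  then have "(\<Sum>i<n. compl_degree n E i) = (\<Sum>i<n. compl_degree n H i)"
    by (simp only: of_nat_eq_iff)
  moreover have "simple_graph n E" "simple_graph n H"
    using assms unfolding turan_extremal_def by blast+
  ultimately show ?thesis using num_edges_compl_degree[of n E] num_edges_compl_degree[of n H] by simp
qed

lemma sum_compl_degree_le_of_num_edges_ge:
  assumes G: "simple_graph n E" and H: "turan_extremal r n H"
    and le: "num_edges n H \<le> num_edges n E"
  shows "(\<Sum>i<n. real (compl_degree n E i)) \<le> turan_compl_degree_sum r n"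
proof -
  have "(\<Sum>i<n. compl_degree n E i) \<le> (\<Sum>i<n. compl_degree n H i)"
    using num_edges_le_iff_sum_compl_degree_ge[OF G] H le unfolding turan_extremal_def by blast
  then have "(\<Sum>i<n. real (compl_degree n E i)) \<le> (\<Sum>i<n. real (compl_degree n H i))"
    unfolding of_nat_sum[symmetric] of_nat_le_iff .
  then show ?thesis using H unfolding turan_extremal_def by simp
qed

lemma card_residue_class:
  assumes "j < r"
  shows "card {i. i < n \<and> i mod r = j} = n div r + (if j < n mod r then 1 else 0)"
proof (induction n)
  case (Suc n)
  have "{i. i < Suc n \<and> i mod r = j} = {i. i < n \<and> i mod r = j} \<union> (if n mod r = j then {n} else {})"
    by (auto simp: less_Suc_eq)
  then have "card {i. i < Suc n \<and> i mod r = j} = card {i. i < n \<and> i mod r = j} + (if n mod r = j then 1 else 0)"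
    by (simp add: card_Un_disjoint)
  then show ?case
    using Suc assms mod_less_divisor[of r n] by (auto simp: mod_Suc div_Suc)
qed simp

lemma turan_simple_graph: "simple_graph n (turan r)"
  unfolding simple_graph_def turan_def by auto

lemma compl_degree_turan:
  assumes "i < n"
  shows "compl_degree n (turan r) i + 1 = card {u. u < n \<and> u mod r = i mod r}"
proof -
  let ?C = "{u. u < n \<and> u mod r = i mod r}"
  have "compl_neighbours n (turan r) i = ?C - {i}"
    unfolding compl_neighbours_def turan_def by auto
  moreover have "i \<in> ?C" "finite ?C" using assms by auto
  moreover from this have "0 < card ?C" by (auto simp: card_gt_0_iff)
  ultimately show ?thesis unfolding compl_degree_def by (simp add: card_Diff_singleton)
qed

lemma turan_extremal_turan:
  assumes r: "0 < r"
  shows "turan_extremal r n (turan r)"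
proof -
  let ?h = "compl_degree n (turan r)" and ?a = "n div r" and ?b = "n mod r"
  let ?c = "\<lambda>j. card {u. u < n \<and> u mod r = j}"
  have c: "?c j = ?a + (if j < ?b then 1 else 0)" if "j < r" for j
    using card_residue_class[OF that] .
  have degrees: "?h i = ?a \<or> ?h i + 1 = ?a" if "i < n" for i
    using compl_degree_turan[OF that, of r] c[of "i mod r"] r by (auto split: if_splits)
  have "real (?h i) = real (?c (i mod r)) - 1" if "i < n" for i
    using arg_cong[OF compl_degree_turan[OF that, of r], of real] by simp
  then have "(\<Sum>i<n. real (?h i)) = (\<Sum>i<n. real (?c (i mod r)) - 1)"
    by (intro sum.cong) auto
  also have "\<dots> = (\<Sum>j<r. \<Sum>i | i \<in> {..<n} \<and> i mod r = j. real (?c (i mod r)) - 1)"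
    using r by (intro sum.group[symmetric]) auto
  also have "\<dots> = (\<Sum>j<r. real (?c j) * (real (?c j) - 1))"
    by (intro sum.cong) auto
  also have "\<dots> = (\<Sum>j<r. if j < ?b then (real ?a + 1) * real ?a else real ?a * (real ?a - 1))"
    using c by (intro sum.cong) auto
  also have "\<dots> = turan_compl_degree_sum r n"
  proof -
    have "{..<r} = {..<?b} \<union> {?b..<r}" "{..<?b} \<inter> {?b..<r} = {}"
      using mod_less_divisor[OF r, of n] by auto
    then show ?thesis
      unfolding turan_compl_degree_sum_def Let_def
      by (simp add: sum.union_disjoint of_nat_diff less_imp_le[OF mod_less_divisor[OF r]])
  qed
  finally have sum_h: "(\<Sum>i<n. real (?h i)) = turan_compl_degree_sum r n" .
  have "?h j = ?h i" if "i < n" "j \<in> compl_neighbours n (turan r) i" for i j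
    using that compl_degree_turan[of i n r] compl_degree_turan[of j n r]
    unfolding compl_neighbours_def turan_def by simp
  then show ?thesis
    unfolding turan_extremal_def using turan_simple_graph degrees sum_h by blast
qed

section \<open>The family \<open>F\<^sub>r(n)\<close> as a join\<close>

lemma compl_degree_in_join:
  assumes G: "simple_graph n E" and XY: "X \<inter> Y = {}" "X \<union> Y = {0..<n}"
    and join: "\<forall>x\<in>X. \<forall>y\<in>Y. E x y" and v: "v \<in> X"
  shows "compl_degree n E v + card {u \<in> X. E v u} + 1 = card X"
proof -
  have fin: "finite X" using XY(2) by (metis finite_Un finite_atLeastLessThan)
  have vn: "v < n" using v XY(2) by auto
  let ?N = "{u \<in> X. E v u}" and ?M = "{u \<in> X. u \<noteq> v \<and> \<not> E v u}"
  have fins: "finite ?N" "finite ?M" using fin by auto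
  have "compl_neighbours n E v = ?M"
    using XY join v unfolding compl_neighbours_def by auto
  then have M: "compl_degree n E v = card ?M" unfolding compl_degree_def by simp
  have "X = insert v (?N \<union> ?M)" using v by auto
  then have "card X = card (insert v (?N \<union> ?M))" by (rule arg_cong)
  also have "\<dots> = Suc (card (?N \<union> ?M))"
    using fins simple_graph_irrefl[OF G vn] by (simp add: card_insert_disjoint)
  also have "card (?N \<union> ?M) = card ?N + card ?M" using fins by (intro card_Un_disjoint) auto
  finally show ?thesis using M by simp
qed

lemma join_sym:
  assumes G: "simple_graph n E" and XY: "X \<union> Y = {0..<n}" and join: "\<forall>x\<in>X. \<forall>y\<in>Y. E x y"
  shows "\<forall>y\<in>Y. \<forall>x\<in>X. E y x"
proof (intro ballI)
  fix y x assume yx: "y \<in> Y" "x \<in> X"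
  then have "x < n" "y < n" using XY by auto
  then show "E y x" using yx join simple_graph_sym[OF G] by blast
qed

lemma induced_degree_in_join_iff:
  assumes G: "simple_graph n E" and XY: "X \<inter> Y = {}" "X \<union> Y = {0..<n}"
    and join: "\<forall>x\<in>X. \<forall>y\<in>Y. E x y" and v: "v \<in> X" and cX: "card X = c * m"
  shows "card {u \<in> X. E v u} = (c - 1) * m \<longleftrightarrow> compl_degree n E v + 1 = m"
proof -
  have "finite X" using XY(2) by (metis finite_Un finite_atLeastLessThan)
  then have "0 < card X" using v by (auto simp: card_gt_0_iff)
  then obtain k where "c = Suc k" using cX by (cases c) auto
  then show ?thesis using compl_degree_in_join[OF G XY join v] cX by auto
qed

text \<open>The regular case \<open>n mod r = 0\<close> of \<open>family_F\<close> is the join with \<open>X = {}\<close>.\<close>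

lemma family_F_iff_join:
  assumes r: "0 < r"
  shows "family_F r n E \<longleftrightarrow> simple_graph n E \<and>
    (\<exists>X Y. X \<inter> Y = {} \<and> X \<union> Y = {0..<n} \<and>
       card X = n mod r * (n div r + 1) \<and> card Y = (r - n mod r) * (n div r) \<and>
       (\<forall>x\<in>X. \<forall>y\<in>Y. E x y) \<and>
       induced_regular E X ((n mod r - 1) * (n div r + 1)) \<and>
       induced_regular E Y ((r - n mod r - 1) * (n div r)))"
proof (cases "n mod r = 0")
  case True
  have ra: "r * (n div r) = n" using mult_div_mod_eq[of r n] True by simp
  show ?thesis
  proof
    assume "family_F r n E"
    then have G: "simple_graph n E" and reg: "induced_regular E {0..<n} ((r - 1) * (n div r))"
      unfolding family_F_def Let_def using True by auto
    show "simple_graph n E \<and> (\<exists>X Y. X \<inter> Y = {} \<and> X \<union> Y = {0..<n} \<and>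
       card X = n mod r * (n div r + 1) \<and> card Y = (r - n mod r) * (n div r) \<and>
       (\<forall>x\<in>X. \<forall>y\<in>Y. E x y) \<and>
       induced_regular E X ((n mod r - 1) * (n div r + 1)) \<and>
       induced_regular E Y ((r - n mod r - 1) * (n div r)))"
      by (rule conjI[OF G], rule exI[of _ "{}"], rule exI[of _ "{0..<n}"])
         (use True ra reg in \<open>simp add: induced_regular_def\<close>)
  next
    assume "simple_graph n E \<and> (\<exists>X Y. X \<inter> Y = {} \<and> X \<union> Y = {0..<n} \<and>
       card X = n mod r * (n div r + 1) \<and> card Y = (r - n mod r) * (n div r) \<and>
       (\<forall>x\<in>X. \<forall>y\<in>Y. E x y) \<and>
       induced_regular E X ((n mod r - 1) * (n div r + 1)) \<and>
       induced_regular E Y ((r - n mod r - 1) * (n div r)))"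
    then obtain X Y where G: "simple_graph n E" and XY: "X \<union> Y = {0..<n}" and "card X = 0"
      and reg: "induced_regular E Y ((r - 1) * (n div r))"
      using True by auto
    moreover have "finite X" using XY by (metis finite_Un finite_atLeastLessThan)
    ultimately have "Y = {0..<n}" using XY by simp
    then show "family_F r n E" unfolding family_F_def Let_def using True G reg by simp
  qed
next
  case False
  then show ?thesis unfolding family_F_def Let_def by simp
qed

lemma sum_two_valued:
  fixes f :: "nat \<Rightarrow> real"
  assumes XY: "X \<inter> Y = {}" "X \<union> Y = {0..<n}"
    and fX: "\<And>i. i \<in> X \<Longrightarrow> f i = c" and fY: "\<And>i. i \<in> Y \<Longrightarrow> f i = d"
  shows "(\<Sum>i<n. f i) = real (card X) * c + real (card Y) * d"
proof -
  have fin: "finite X" "finite Y" using XY(2) by (metis finite_Un finite_atLeastLessThan)+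
  have "(\<Sum>i<n. f i) = (\<Sum>i\<in>X. f i) + (\<Sum>i\<in>Y. f i)"
    using sum.union_disjoint[OF fin XY(1)] XY(2) by (simp add: atLeast0LessThan)
  also have "\<dots> = (\<Sum>i\<in>X. c) + (\<Sum>i\<in>Y. d)"
    using sum.cong[OF refl fX, of X] sum.cong[OF refl fY, of Y] by simp
  finally show ?thesis by simp
qed

text \<open>On a two-valued complement degree sequence, \<open>\<Sum> (h - (a - 1))\<close> counts the vertices
  with \<open>h = a\<close>.\<close>

lemma sum_compl_degree_eq_iff_card:
  assumes r: "0 < r" and XY: "X \<inter> Y = {}" "X \<union> Y = {0..<n}"
    and hX: "\<And>i. i \<in> X \<Longrightarrow> compl_degree n E i = n div r"
    and hY: "\<And>i. i \<in> Y \<Longrightarrow> compl_degree n E i + 1 = n div r"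
  shows "(\<Sum>i<n. real (compl_degree n E i)) = turan_compl_degree_sum r n
         \<longleftrightarrow> card X = n mod r * (n div r + 1)"
proof -
  let ?a = "n div r" and ?b = "n mod r" and ?h = "compl_degree n E"
  have n: "real n = real r * real ?a + real ?b"
    using mult_div_mod_eq[of r n] by (metis of_nat_add of_nat_mult)
  have "(\<Sum>i<n. real (?h i) - (real ?a - 1)) = real (card X) * 1 + real (card Y) * 0"
    by (rule sum_two_valued[OF XY]) (auto simp: hX simp flip: hY)
  then have "real (card X) = (\<Sum>i<n. real (?h i)) - real n * (real ?a - 1)"
    by (simp add: sum_subtractf)
  moreover have "real (?b * (?a + 1)) = turan_compl_degree_sum r n - real n * (real ?a - 1)"
    unfolding turan_compl_degree_sum_def Let_def n by (simp add: algebra_simps)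
  ultimately show ?thesis by (metis add_diff_cancel_right' diff_add_cancel of_nat_eq_iff)
qed

lemma turan_extremal_of_family_F:
  assumes r: "0 < r" and F: "family_F r n E"
  shows "turan_extremal r n E"
proof -
  let ?a = "n div r" and ?b = "n mod r" and ?h = "compl_degree n E"
  obtain X Y where G: "simple_graph n E" and XY: "X \<inter> Y = {}" "X \<union> Y = {0..<n}"
    and cX: "card X = ?b * (?a + 1)" and cY: "card Y = (r - ?b) * ?a"
    and join: "\<forall>x\<in>X. \<forall>y\<in>Y. E x y"
    and regX: "induced_regular E X ((?b - 1) * (?a + 1))"
    and regY: "induced_regular E Y ((r - ?b - 1) * ?a)"
    using F unfolding family_F_iff_join[OF r] by blast
  have YX: "Y \<inter> X = {}" "Y \<union> X = {0..<n}" using XY by auto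
  have join': "\<forall>y\<in>Y. \<forall>x\<in>X. E y x" by (rule join_sym[OF G XY(2) join])
  have hX: "?h v = ?a" if "v \<in> X" for v
    using induced_degree_in_join_iff[OF G XY join that cX] regX that
    unfolding induced_regular_def by simp
  have hY: "?h v + 1 = ?a" if "v \<in> Y" for v
    using induced_degree_in_join_iff[OF G YX join' that cY] regY that
    unfolding induced_regular_def by (simp add: diff_diff_left)
  have "?h j = ?h i" if "i < n" "j \<in> compl_neighbours n E i" for i j
  proof -
    have "i \<in> X \<union> Y" "j \<in> X \<union> Y" "\<not> E i j"
      using that XY(2) unfolding compl_neighbours_def by auto
    then have "i \<in> X \<and> j \<in> X \<or> i \<in> Y \<and> j \<in> Y" using join join' by blast
    then show ?thesis using hX hY by (metis add_right_cancel)
  qed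
  moreover have "?h i = ?a \<or> ?h i + 1 = ?a" if "i < n" for i
  proof -
    have "i \<in> X \<union> Y" using that XY(2) by auto
    then show ?thesis using hX hY by blast
  qed
  ultimately show ?thesis
    unfolding turan_extremal_def
    using G sum_compl_degree_eq_iff_card[OF r XY hX hY] cX by blast
qed

lemma family_F_of_turan_extremal:
  assumes r: "0 < r" and ext: "turan_extremal r n E"
  shows "family_F r n E"
proof -
  let ?a = "n div r" and ?b = "n mod r" and ?h = "compl_degree n E"
  have G: "simple_graph n E"
    and degrees: "\<And>i. i < n \<Longrightarrow> ?h i = ?a \<or> ?h i + 1 = ?a"
    and sum_h: "(\<Sum>i<n. real (?h i)) = turan_compl_degree_sum r n"
    and nbrs: "\<And>i j. i < n \<Longrightarrow> j \<in> compl_neighbours n E i \<Longrightarrow> ?h j = ?h i"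
    using ext unfolding turan_extremal_def by auto
  define X where "X = {i. i < n \<and> ?h i = ?a}"
  define Y where "Y = {i. i < n \<and> ?h i + 1 = ?a}"
  have cover: "i \<in> X \<or> i \<in> Y" if "i < n" for i
    using degrees[OF that] that unfolding X_def Y_def by auto
  have "X \<inter> Y = {}" "X \<union> Y \<subseteq> {0..<n}" unfolding X_def Y_def by auto
  moreover have "{0..<n} \<subseteq> X \<union> Y" using cover by (metis UnI1 UnI2 atLeastLessThan_iff subsetI)
  ultimately have XY: "X \<inter> Y = {}" "X \<union> Y = {0..<n}" by auto
  then have YX: "Y \<inter> X = {}" "Y \<union> X = {0..<n}" by auto
  have join: "\<forall>x\<in>X. \<forall>y\<in>Y. E x y"
    using nbrs unfolding X_def Y_def compl_neighbours_def by force
  have join': "\<forall>y\<in>Y. \<forall>x\<in>X. E y x" by (rule join_sym[OF G XY(2) join])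
  have cX: "card X = ?b * (?a + 1)"
    using sum_compl_degree_eq_iff_card[OF r XY] sum_h unfolding X_def Y_def by simp
  have "card X + card Y = n" using card_Un_disjoint[of X Y] XY by (simp add: X_def Y_def)
  moreover have "card X = ?b * ?a + ?b" using cX by simp
  ultimately have "card Y + ?b * ?a = r * ?a" using mult_div_mod_eq[of r n] by linarith
  then have cY: "card Y = (r - ?b) * ?a" by (metis add_diff_cancel_right' diff_mult_distrib)
  have regX: "card {u \<in> X. E v u} = (?b - 1) * (?a + 1)" if "v \<in> X" for v
    using induced_degree_in_join_iff[OF G XY join that cX] that unfolding X_def by simp
  have regY: "card {u \<in> Y. E v u} = (r - ?b - 1) * ?a" if "v \<in> Y" for v
    using induced_degree_in_join_iff[OF G YX join' that cY] that unfolding Y_def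
    by (simp add: diff_diff_left)
  show ?thesis
    unfolding family_F_iff_join[OF r] induced_regular_def
    by (rule conjI[OF G], rule exI[of _ X], rule exI[of _ Y]) (simp add: XY cX cY join regX regY)
qed

lemma adj_mat_trivial:
  assumes n: "n \<le> 1" and G: "simple_graph n E"
  shows "adj_mat n E = 0\<^sub>m n n"
proof (rule eq_matI)
  fix i j assume "i < dim_row (0\<^sub>m n n :: complex mat)" "j < dim_col (0\<^sub>m n n :: complex mat)"
  then have "i = 0" "j = 0" "0 < n" using n by auto
  then show "adj_mat n E $$ (i, j) = 0\<^sub>m n n $$ (i, j)"
    using simple_graph_irrefl[OF G] unfolding adj_mat_def by simp
qed (auto simp: adj_mat_def)

lemma num_edges_trivial:
  assumes "n \<le> 1"
  shows "num_edges n E = 0"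
proof -
  have none: "{(i, j). i < j \<and> j < n \<and> E i j} = {}" using assms by auto
  show ?thesis by (simp only: num_edges_def none card.empty)
qed

lemma family_F_trivial:
  assumes r: "2 \<le> r" and n: "n \<le> 1" and G: "simple_graph n E"
  shows "family_F r n E"
proof -
  have div: "n mod r = n" "n div r = 0" using r n by auto
  have "{u \<in> {0..<n}. E v u} = {}" if v: "v < n" for v
  proof -
    have "u = v" if "u < n" for u using that v n by linarith
    then show ?thesis using simple_graph_irrefl[OF G v] by auto
  qed
  then have reg: "induced_regular E {0..<n} 0" unfolding induced_regular_def by simp
  have "0 < r" "n - 1 = 0" using r n by auto
  show ?thesis
    unfolding family_F_iff_join[OF \<open>0 < r\<close>]
    by (rule conjI[OF G], rule exI[of _ "{0..<n}"], rule exI[of _ "{}"])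
       (use \<open>n - 1 = 0\<close> reg in \<open>auto simp: div induced_regular_def\<close>)
qed

theorem theorem1p7:
  fixes r n :: nat
  assumes "r \<ge> 2"
  shows "(\<forall>E. simple_graph n E \<and> num_edges n E \<ge> num_edges n (turan r) \<longrightarrow>
            graph_spectral_radius n E \<ge> graph_spectral_radius n (turan r))
       \<and> (\<forall>E. simple_graph n E \<and> num_edges n E \<ge> num_edges n (turan r) \<and>
            graph_spectral_radius n E = graph_spectral_radius n (turan r) \<longrightarrow>
            family_F r n E)
       \<and> (\<forall>E. family_F r n E \<longrightarrow>
            num_edges n E = num_edges n (turan r) \<and>
            graph_spectral_radius n E = graph_spectral_radius n (turan r))"
proof (cases "2 \<le> n")
  case True
  have r: "0 < r" "1 \<le> r" using assms by auto
  have T: "turan_extremal r n (turan r)" by (rule turan_extremal_turan[OF r(1)])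
  have radius_T: "graph_spectral_radius n (turan r) = turan_radius r n"
    by (rule spectral_radius_turan_extremal[OF r(2) True T])
  have sum_le: "(\<Sum>i<n. real (compl_degree n E i)) \<le> turan_compl_degree_sum r n"
    if "simple_graph n E" "num_edges n (turan r) \<le> num_edges n E" for E
    by (rule sum_compl_degree_le_of_num_edges_ge[OF that(1) T that(2)])
  have "graph_spectral_radius n (turan r) \<le> graph_spectral_radius n E"
    if "simple_graph n E" "num_edges n (turan r) \<le> num_edges n E" for E
    unfolding radius_T by (rule turan_radius_le_spectral_radius[OF r(2) True that(1) sum_le[OF that]])
  moreover have "family_F r n E"
    if "simple_graph n E" "num_edges n (turan r) \<le> num_edges n E"
      "graph_spectral_radius n E = graph_spectral_radius n (turan r)" for E
    using turan_extremal_of_spectral_radius_le[OF r(2) True that(1) sum_le[OF that(1,2)]] that(3)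
      family_F_of_turan_extremal[OF r(1)] unfolding radius_T by simp
  moreover have "num_edges n E = num_edges n (turan r) \<and>
      graph_spectral_radius n E = graph_spectral_radius n (turan r)" if "family_F r n E" for E
    using turan_extremal_of_family_F[OF r(1) that] num_edges_turan_extremal[OF _ T]
      spectral_radius_turan_extremal[OF r(2) True] radius_T by simp
  ultimately show ?thesis by blast
next
  case False
  then have n: "n \<le> 1" by simp
  have same: "graph_spectral_radius n E = graph_spectral_radius n (turan r)" if "simple_graph n E" for E
    unfolding graph_spectral_radius_def
    using adj_mat_trivial[OF n that] adj_mat_trivial[OF n turan_simple_graph] by simp
  show ?thesis
  proof (intro conjI allI impI)
    fix E assume "simple_graph n E \<and> num_edges n (turan r) \<le> num_edges n E"
    then show "graph_spectral_radius n (turan r) \<le> graph_spectral_radius n E" using same by simp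
  next
    fix E assume "simple_graph n E \<and> num_edges n (turan r) \<le> num_edges n E \<and>
      graph_spectral_radius n E = graph_spectral_radius n (turan r)"
    then show "family_F r n E" using family_F_trivial[OF assms n] by simp
  next
    fix E show "num_edges n E = num_edges n (turan r)" using num_edges_trivial[OF n] by simp
  next
    fix E assume "family_F r n E"
    then have "simple_graph n E" unfolding family_F_def by (rule conjunct1)
    then show "graph_spectral_radius n E = graph_spectral_radius n (turan r)" by (rule same)
  qed
qed

end
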